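(* Let $L$ be a finite-dimensional simple Lie algebra, and let $L = L_a \oplus L_b$ be a decomposition of the vector space $L$ into a direct sum of two nonzero subspaces $L_a, L_b$ which is a grading, i.e. for every pair $j,k \in \{a,b\}$ there exists $l \in \{a,b\}$ with $[L_j, L_k] \subseteq L_l$. Then this grading is a $\mathbb{Z}_2$-grading: the labels $a,b$ can be identified with the two elements $0,1$ of the group $\mathbb{Z}_2$ (by a bijection $\{a,b\}\to\mathbb{Z}_2$) in such a way that $[L_i, L_j] \subseteq L_{i+j}$ for all $i,j \in \mathbb{Z}_2$.
   Context: A grading of a Lie algebra $L$ is a decomposition of $L$ as a direct sum of vector subspaces $L_j$, $j\in\mathcal J$, such that for any $j,k\in\mathcal J$ there is $l\in\mathcal J$ with $[L_j,L_k]\subseteq L_l$. A $G$-grading for an abelian group $G$ (written additively) is a decomposition $L=\bigoplus_{i\in G}L_i$ with $[L_i,L_j]\subseteq L_{i+j}$ for all $i,j\in G$. *)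

theory Defs
  imports Main "HOL.Vector_Spaces" "HOL-Library.Z2"
begin

definition lie_algebra :: "('k::field \<Rightarrow> 'v::ab_group_add \<Rightarrow> 'v) \<Rightarrow> ('v \<Rightarrow> 'v \<Rightarrow> 'v) \<Rightarrow> bool" where
  "lie_algebra sc br \<longleftrightarrow>
     vector_space sc \<and>
     (\<forall>x y z. br (x + y) z = br x z + br y z) \<and>
     (\<forall>x y z. br x (y + z) = br x y + br x z) \<and>
     (\<forall>c x y. br (sc c x) y = sc c (br x y)) \<and>
     (\<forall>c x y. br x (sc c y) = sc c (br x y)) \<and>
     (\<forall>x. br x x = 0) \<and>
     (\<forall>x y z. br x (br y z) + br y (br z x) + br z (br x y) = 0)"

definition finite_dim :: "('k::field \<Rightarrow> 'v::ab_group_add \<Rightarrow> 'v) \<Rightarrow> bool" where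
  "finite_dim sc \<longleftrightarrow> (\<exists>B. finite B \<and> module.span sc B = UNIV)"

definition lie_ideal :: "('k::field \<Rightarrow> 'v::ab_group_add \<Rightarrow> 'v) \<Rightarrow> ('v \<Rightarrow> 'v \<Rightarrow> 'v) \<Rightarrow> 'v set \<Rightarrow> bool" where
  "lie_ideal sc br I \<longleftrightarrow> module.subspace sc I \<and> (\<forall>x y. y \<in> I \<longrightarrow> br x y \<in> I)"

definition simple_lie_algebra :: "('k::field \<Rightarrow> 'v::ab_group_add \<Rightarrow> 'v) \<Rightarrow> ('v \<Rightarrow> 'v \<Rightarrow> 'v) \<Rightarrow> bool" where
  "simple_lie_algebra sc br \<longleftrightarrow> lie_algebra sc br \<and> (\<exists>x y. br x y \<noteq> 0) \<and>
     (\<forall>I. lie_ideal sc br I \<longrightarrow> I = {0} \<or> I = UNIV)"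

text \<open>[A,B] \<subseteq> C, i.e. all brackets of elements of A with elements of B lie in C
(C a subspace, so this is the same as the span of the brackets lying in C).\<close>
definition br_sub :: "('v \<Rightarrow> 'v \<Rightarrow> 'v) \<Rightarrow> 'v set \<Rightarrow> 'v set \<Rightarrow> 'v set \<Rightarrow> bool" where
  "br_sub br A B C \<longleftrightarrow> (\<forall>x\<in>A. \<forall>y\<in>B. br x y \<in> C)"

end

theory Submission
  imports Defs
begin

text \<open>Write \<open>L = X \<oplus> Y\<close> and say \<open>[X,Y] \<subseteq> Y\<close>. Then \<open>[Y,Y] \<subseteq> Y\<close> is impossible, since \<open>Y\<close> would be
  a proper nonzero ideal; so \<open>[Y,Y] \<subseteq> X\<close>. If moreover \<open>[X,X] \<subseteq> Y\<close>, the Jacobi identity puts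
  \<open>[X,[Y,Y]]\<close> into \<open>X \<inter> Y = 0\<close>, so \<open>Y\<close> plus the centre of \<open>X\<close> is a nonzero ideal, hence all
  of \<open>L\<close>; thus \<open>X\<close> is abelian and \<open>[X,X] \<subseteq> X\<close> after all. Either way \<open>X\<close> is the even and \<open>Y\<close>
  the odd part of a \<open>\<int>\<^sub>2\<close>-grading.\<close>

locale lie_alg =
  fixes sc :: "'k::field \<Rightarrow> 'v::ab_group_add \<Rightarrow> 'v" and br :: "'v \<Rightarrow> 'v \<Rightarrow> 'v"
  assumes lie_algebra: "lie_algebra sc br"

sublocale lie_alg \<subseteq> vector_space sc
  using lie_algebra by (simp add: lie_algebra_def)

context lie_alg
begin

lemma br_add_left: "br (x + y) z = br x z + br y z"
  and br_add_right: "br x (y + z) = br x y + br x z"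
  and br_scale_right: "br x (sc c y) = sc c (br x y)"
  and br_self: "br x x = 0"
  and jacobi: "br x (br y z) + br y (br z x) + br z (br x y) = 0"
  using lie_algebra by (simp_all add: lie_algebra_def)

lemma br_zero_right: "br x 0 = 0"
  using br_add_right[of x 0 0] by simp

lemma br_antisym: "br x y = - br y x"
proof -
  have "0 = br (x + y) (x + y)" by (simp add: br_self)
  also have "\<dots> = br x x + br y x + (br x y + br y y)"
    by (simp only: br_add_left br_add_right)
  also have "\<dots> = br x y + br y x"
    by (simp add: br_self add.commute)
  finally show ?thesis by (metis eq_neg_iff_add_eq_0)
qed

lemma br_minus_right: "br x (- y) = - br x y"
proof -
  have "br x y + br x (- y) = 0"
    using br_add_right[of x y "- y"] br_zero_right[of x] by simp
  then show ?thesis by (metis minus_unique)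
qed

lemma br_sub_swap: "subspace C \<Longrightarrow> br_sub br A B C \<Longrightarrow> br_sub br B A C"
  unfolding br_sub_def by (metis br_antisym subspace_neg)

lemma lie_ideal_summand:
  assumes "subspace X" and "\<And>v. \<exists>a b. a \<in> X \<and> b \<in> Y \<and> v = a + b"
    and "br_sub br X X X" and "br_sub br Y X X"
  shows "lie_ideal sc br X"
  unfolding lie_ideal_def
proof (intro conjI allI impI)
  fix x a assume "a \<in> X"
  obtain a' b' where "a' \<in> X" "b' \<in> Y" "x = a' + b'" using assms(2) by blast
  with \<open>a \<in> X\<close> assms(3,4) show "br x a \<in> X"
    unfolding br_sub_def by (simp add: br_add_left subspace_add[OF assms(1)])
qed (fact assms(1))

lemma subspace_centralizer:
  assumes "subspace Y"
  shows "subspace {z \<in> Y. \<forall>b\<in>Y. br b z = 0}"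
  unfolding subspace_def
  by (auto simp: br_add_right br_scale_right br_zero_right
      subspace_0[OF assms] subspace_add[OF assms] subspace_scale[OF assms])

end

locale simple_lie_decomp = lie_alg +
  fixes X Y
  assumes simple: "simple_lie_algebra sc br"
    and subspace_X: "module.subspace sc X" and subspace_Y: "module.subspace sc Y"
    and X_nonzero: "X \<noteq> {0}" and Y_nonzero: "Y \<noteq> {0}"
    and inter_zero: "X \<inter> Y = {0}"
    and sum_UNIV: "\<And>v. \<exists>a b. a \<in> X \<and> b \<in> Y \<and> v = a + b"

lemma simple_lie_decomp_swap:
  assumes "simple_lie_decomp sc br X Y"
  shows "simple_lie_decomp sc br Y X"
  using assms unfolding simple_lie_decomp_def simple_lie_decomp_axioms_def
  by (metis Int_commute add.commute)

context simple_lie_decomp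
begin

lemma ideal_trivial: "lie_ideal sc br I \<Longrightarrow> I \<noteq> {0} \<Longrightarrow> I = UNIV"
  using simple by (auto simp: simple_lie_algebra_def)

lemma summand_not_ideal: "\<not> (br_sub br X X X \<and> br_sub br Y X X)"
proof
  assume "br_sub br X X X \<and> br_sub br Y X X"
  then have "X = UNIV"
    using ideal_trivial lie_ideal_summand subspace_X sum_UNIV X_nonzero by blast
  then show False
    using inter_zero Y_nonzero subspace_0[OF subspace_Y] by auto
qed

lemma br_Y_br_XX_eq_0:
  assumes XXY: "br_sub br X X Y" and YYX: "br_sub br Y Y X" and XYX: "br_sub br X Y X"
    and "b \<in> Y" "a1 \<in> X" "a2 \<in> X"
  shows "br b (br a1 a2) = 0"
proof -
  have "br a1 (br a2 b) \<in> Y" "br a2 (br a1 b) \<in> Y"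
    using assms unfolding br_sub_def by auto
  moreover have "br b (br a1 a2) = br a2 (br a1 b) - br a1 (br a2 b)"
    using jacobi[of b a1 a2] br_antisym[of b a1] br_minus_right[of a2]
    by (simp add: algebra_simps)
  ultimately have "br b (br a1 a2) \<in> Y"
    by (simp add: subspace_diff[OF subspace_Y])
  moreover have "br b (br a1 a2) \<in> X"
    using assms unfolding br_sub_def by auto
  ultimately show ?thesis using inter_zero by auto
qed

lemma summand_abelian:
  assumes XXY: "br_sub br X X Y" and YYX: "br_sub br Y Y X" and XYX: "br_sub br X Y X"
    and "subspace C"
  shows "br_sub br Y Y C"
proof -
  define Z where "Z = {z \<in> Y. \<forall>b\<in>Y. br b z = 0}"
  define I where "I = {a + z |a z. a \<in> X \<and> z \<in> Z}"
  have "subspace Z"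
    unfolding Z_def by (rule subspace_centralizer[OF subspace_Y])
  have "lie_ideal sc br I"
    unfolding lie_ideal_def
  proof (intro conjI allI impI)
    show "subspace I"
      unfolding I_def by (rule subspace_sums[OF subspace_X \<open>subspace Z\<close>])
  next
    fix x y assume "y \<in> I"
    then obtain a z where az: "a \<in> X" "z \<in> Z" "y = a + z" unfolding I_def by auto
    obtain a' b' where ab: "a' \<in> X" "b' \<in> Y" "x = a' + b'" using sum_UNIV by blast
    have "br x y = (br a' z + br b' a) + br a' a + br b' z"
      using ab az by (simp add: br_add_left br_add_right algebra_simps)
    moreover have "br b' z = 0" using az ab unfolding Z_def by auto
    moreover have "br a' a \<in> Z"
      using XXY ab az br_Y_br_XX_eq_0[OF XXY YYX XYX] unfolding Z_def br_sub_def by auto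
    moreover have "br a' z + br b' a \<in> X"
      using XYX br_sub_swap[OF subspace_X XYX] ab az subspace_add[OF subspace_X]
      unfolding Z_def br_sub_def by auto
    ultimately show "br x y \<in> I" unfolding I_def by auto
  qed
  moreover have "X \<subseteq> I"
    unfolding I_def using subspace_0[OF \<open>subspace Z\<close>] by force
  ultimately have "I = UNIV"
    using ideal_trivial X_nonzero subspace_0[OF subspace_X] by blast
  have "Y \<subseteq> Z"
  proof
    fix y assume "y \<in> Y"
    obtain a z where az: "a \<in> X" "z \<in> Z" "y = a + z"
      using \<open>I = UNIV\<close> unfolding I_def by blast
    have "z \<in> Y" using \<open>z \<in> Z\<close> unfolding Z_def by blast
    then have "a \<in> Y"
      using subspace_diff[OF subspace_Y \<open>y \<in> Y\<close>] \<open>y = a + z\<close> by force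
    with az inter_zero have "a = 0" by blast
    with az show "y \<in> Z" by simp
  qed
  then show ?thesis
    unfolding br_sub_def Z_def using subspace_0[OF \<open>subspace C\<close>] by auto
qed

lemma even_summand:
  assumes XX: "br_sub br X X X \<or> br_sub br X X Y" and YY: "br_sub br Y Y X \<or> br_sub br Y Y Y"
    and XYY: "br_sub br X Y Y"
  shows "br_sub br X X X \<and> br_sub br Y Y X"
proof -
  interpret YX: simple_lie_decomp sc br Y X
    using simple_lie_decomp_swap simple_lie_decomp_axioms .
  have YYX: "br_sub br Y Y X"
    using YY XYY YX.summand_not_ideal by blast
  have "br_sub br X X X"
    using XX YX.summand_abelian[OF YYX _ br_sub_swap[OF subspace_Y XYY] subspace_X] by blast
  with YYX show ?thesis by blast
qed

end

lemma z2_grading_of_even_label: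
  fixes L :: "bool \<Rightarrow> 'v set"
  assumes "br_sub br (L e) (L e) (L e)" "br_sub br (L (\<not> e)) (L (\<not> e)) (L e)"
    and "br_sub br (L e) (L (\<not> e)) (L (\<not> e))" "br_sub br (L (\<not> e)) (L e) (L (\<not> e))"
  shows "\<exists>\<sigma> :: bit \<Rightarrow> bool. bij \<sigma> \<and> (\<forall>i j. br_sub br (L (\<sigma> i)) (L (\<sigma> j)) (L (\<sigma> (i + j))))"
proof (intro exI conjI allI)
  show "bij (\<lambda>i::bit. e = (i = 0))"
  proof (rule bijI')
    show "(e = (x = 0)) = (e = (y = 0)) \<longleftrightarrow> x = y" for x y :: bit
      by (cases x; cases y) simp_all
    show "\<exists>x::bit. y = (e = (x = 0))" for y
      by (rule exI[of _ "(if y = e then 0 else 1) :: bit"]) auto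
  qed
  fix i j :: bit
  show "br_sub br (L (e = (i = 0))) (L (e = (j = 0))) (L (e = (i + j = 0)))"
    using assms by (cases "i = 0"; cases "j = 0"; cases e) auto
qed

theorem theorem1:
  fixes sc :: "'k::field \<Rightarrow> 'v::ab_group_add \<Rightarrow> 'v"
    and br :: "'v \<Rightarrow> 'v \<Rightarrow> 'v"
    and L :: "bool \<Rightarrow> 'v set"
  assumes "simple_lie_algebra sc br"
    and "finite_dim sc"
    and "\<And>j. module.subspace sc (L j)"
    and "\<And>j. L j \<noteq> {0}"
    and "L True \<inter> L False = {0}"
    and "\<And>v. \<exists>a b. a \<in> L True \<and> b \<in> L False \<and> v = a + b"
    and "\<And>j k. \<exists>l. br_sub br (L j) (L k) (L l)"
  shows "\<exists>\<sigma> :: bit \<Rightarrow> bool. bij \<sigma> \<and>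
           (\<forall>i j. br_sub br (L (\<sigma> i)) (L (\<sigma> j)) (L (\<sigma> (i + j))))"
proof -
  interpret lie_alg sc br
    using assms(1) by unfold_locales (simp add: simple_lie_algebra_def)
  have decomp_TF: "simple_lie_decomp sc br (L True) (L False)"
    using assms by unfold_locales auto
  obtain l where "br_sub br (L True) (L False) (L l)" using assms(7) by blast
  \<comment> \<open>The label other than \<open>l\<close> is the even one.\<close>
  define e where "e = (\<not> l)"
  then have mixed_odd: "br_sub br (L e) (L (\<not> e)) (L (\<not> e))"
    using \<open>br_sub br (L True) (L False) (L l)\<close> br_sub_swap[OF assms(3)] by (cases l) auto
  have "simple_lie_decomp sc br (L e) (L (\<not> e))"
    using decomp_TF simple_lie_decomp_swap by (cases e) auto
  moreover have "br_sub br (L j) (L j) (L e) \<or> br_sub br (L j) (L j) (L (\<not> e))" for j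
  proof -
    obtain l where "br_sub br (L j) (L j) (L l)" using assms(7) by blast
    then show ?thesis by (cases "l = e") auto
  qed
  ultimately have "br_sub br (L e) (L e) (L e) \<and> br_sub br (L (\<not> e)) (L (\<not> e)) (L e)"
    using simple_lie_decomp.even_summand mixed_odd by blast
  then show ?thesis
    using z2_grading_of_even_label mixed_odd br_sub_swap[OF assms(3) mixed_odd] by blast
qed

end
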